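(* Let $q\in Q_{\rm safe}$, $a\in A$, $x\in q$ and $p_v\in\mathcal P_v$, and define $\gamma_{x,a}\in\mathcal D(Q)$ by $\gamma_{x,a}(q'):=T^{a}_{p_v}(q'\mid x)$ for all $q'\in Q$. Then $\gamma_{x,a}\in\Gamma_{q,a}$.
   Context: Fix $n\ge1$, $s\ge1$, $\varepsilon\ge0$. Let $U=\{1,\dots,m\}$ be a finite set of modes, and for each $u\in U$ let $f_u:\mathbb R^n\to\mathbb R^n$ be continuous. $\mathcal D(Y)$ denotes the Borel probability measures on $Y$, and $\mathcal D_s(\mathbb R^n)$ those with finite $s$-th moment. $\mathcal W_s$ is the $s$-Wasserstein distance on $\mathcal D_s(\mathbb R^n)$ induced by the Euclidean norm $\|\cdot\|$. Let $\widehat p_v\in\mathcal D_s(\mathbb R^n)$ be a nominal distribution and set $\mathcal P_v:=\{p\in\mathcal D_s(\mathbb R^n):\mathcal W_s(p,\widehat p_v)\le\varepsilon\}$. For a distribution $p_v$ on $\mathbb R^n$, $u\in U$, $x\in\mathbb R^n$ and Borel $B$, let $T^u_{p_v}(B\mid x):=p_v(\{v: f_u(x)+v\in B\})$. Abstraction. Let $X\subset\mathbb R^n$ be a bounded Borel set and $X_{\rm tgt}\subset X$. Let $Q_{\rm safe}$ be a finite family of pairwise disjoint Borel sets whose union is $X$, each of which is either contained in $X_{\rm tgt}$ or disjoint from it. Let $Q_{\rm tgt}$ be the members of $Q_{\rm safe}$ contained in $X_{\rm tgt}$, let $q_u:=\mathbb R^n\setminus X$, $Q:=Q_{\rm safe}\cup\{q_u\}$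 (a finite partition of $\mathbb R^n$), and $A:=U$. Let $\underline P,\overline P:Q\times A\times Q\to[0,1]$ satisfy $\underline P\le\overline P$ and $\sum_{q'}\underline P(q,a,q')\le1\le\sum_{q'}\overline P(q,a,q')$, with $\underline P(q,a,q')\le\inf_{x\in q}T^a_{\widehat p_v}(q'\mid x)$ and $\overline P(q,a,q')\ge\sup_{x\in q}T^a_{\widehat p_v}(q'\mid x)$ for all $q\in Q_{\rm safe}$, $a\in A$, $q'\in Q$, and $\underline P(q_u,a,q_u)=\overline P(q_u,a,q_u)=1$. Put $\widehat\Gamma_{q,a}:=\{\gamma\in\mathcal D(Q):\underline P(q,a,q')\le\gamma(q')\le\overline P(q,a,q')\ \forall q'\}$. Define the cost $c(q,q'):=\inf\{\|x-y\|^s:x\in q,y\in q'\}$ and, for $\gamma,\gamma'\in\mathcal D(Q)$, $\mathcal T_c(\gamma,\gamma'):=\min_{\pi}\sum_{q,q'}c(q,q')\pi(q,q')$, where the minimum is over couplings $\pi$ of $\gamma$ and $\gamma'$. For $q\in Q_{\rm safe}$ and $a\in A$ let $\Gamma_{q,a}:=\{\gamma\in\mathcal D(Q):\exists\widehat\gamma\in\widehat\Gamma_{q,a},\ \mathcal T_c(\gamma,\widehat\gamma)\le\varepsilon^s\}$, and let $\Gamma_{q_u,a}:=\widehat\Gamma_{q_u,a}$. *)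

theory Defs
  imports "HOL-Probability.Probability"
begin

definition Ds :: "real \<Rightarrow> 'a::euclidean_space measure set" where
  "Ds s = {p. sets p = sets borel \<and> prob_space p \<and>
              (\<integral>\<^sup>+ x. ennreal (norm x powr s) \<partial>p) < \<infinity>}"

definition couplings :: "'a::euclidean_space measure \<Rightarrow> 'a measure \<Rightarrow> ('a \<times> 'a) measure set" where
  "couplings p p' = {\<pi>. sets \<pi> = sets borel \<and> prob_space \<pi> \<and>
                        distr \<pi> borel fst = p \<and> distr \<pi> borel snd = p'}"

definition wasserstein :: "real \<Rightarrow> 'a::euclidean_space measure \<Rightarrow> 'a measure \<Rightarrow> real" where
  "wasserstein s p p' =
     enn2real (INF \<pi>\<in>couplings p p'. \<integral>\<^sup>+ z. ennreal (norm (fst z - snd z) powr s) \<partial>\<pi>) powr (1 / s)"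

definition Pv :: "real \<Rightarrow> real \<Rightarrow> 'a::euclidean_space measure \<Rightarrow> 'a measure set" where
  "Pv s eps phat = {p \<in> Ds s. wasserstein s p phat \<le> eps}"

definition Tk :: "(nat \<Rightarrow> 'a::euclidean_space \<Rightarrow> 'a) \<Rightarrow> nat \<Rightarrow> 'a measure \<Rightarrow> 'a \<Rightarrow> 'a set \<Rightarrow> real" where
  "Tk f u pv x B = measure pv {v. f u x + v \<in> B}"

text \<open>Abstract state set Q = Q_safe together with q_u = complement of X.\<close>
definition Qall :: "'a set \<Rightarrow> 'a set set \<Rightarrow> 'a set set" where
  "Qall X Qsafe = insert (- X) Qsafe"

text \<open>Distributions on a finite set Q (represented as functions, only values on Q matter).\<close>
definition distrs :: "'b set \<Rightarrow> ('b \<Rightarrow> real) set" where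
  "distrs Q = {\<gamma>. (\<forall>q\<in>Q. 0 \<le> \<gamma> q) \<and> (\<Sum>q\<in>Q. \<gamma> q) = 1}"

text \<open>Cost c(q,q') = inf{ |x-y|^s : x \<in> q, y \<in> q'} (with inf of the empty set = +\<infinity>).\<close>
definition cell_cost :: "real \<Rightarrow> 'a::euclidean_space set \<Rightarrow> 'a set \<Rightarrow> ereal" where
  "cell_cost s q q' = (INF z\<in>q \<times> q'. ereal (norm (fst z - snd z) powr s))"

definition fin_couplings :: "'b set \<Rightarrow> ('b \<Rightarrow> real) \<Rightarrow> ('b \<Rightarrow> real) \<Rightarrow> ('b \<times> 'b \<Rightarrow> real) set" where
  "fin_couplings Q \<gamma> \<gamma>' = {\<pi>. (\<forall>q\<in>Q. \<forall>q'\<in>Q. 0 \<le> \<pi> (q, q')) \<and>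
       (\<forall>q\<in>Q. (\<Sum>q'\<in>Q. \<pi> (q, q')) = \<gamma> q) \<and>
       (\<forall>q'\<in>Q. (\<Sum>q\<in>Q. \<pi> (q, q')) = \<gamma>' q')}"

definition OT_cost :: "real \<Rightarrow> 'a::euclidean_space set set \<Rightarrow> ('a set \<Rightarrow> real) \<Rightarrow> ('a set \<Rightarrow> real) \<Rightarrow> ereal" where
  "OT_cost s Q \<gamma> \<gamma>' = (INF \<pi>\<in>fin_couplings Q \<gamma> \<gamma>'.
       (\<Sum>z\<in>Q \<times> Q. cell_cost s (fst z) (snd z) * ereal (\<pi> z)))"

definition hatGamma :: "'b set \<Rightarrow> ('b \<Rightarrow> nat \<Rightarrow> 'b \<Rightarrow> real) \<Rightarrow> ('b \<Rightarrow> nat \<Rightarrow> 'b \<Rightarrow> real)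
    \<Rightarrow> 'b \<Rightarrow> nat \<Rightarrow> ('b \<Rightarrow> real) set" where
  "hatGamma Q Plo Phi q a = {\<gamma> \<in> distrs Q. \<forall>q'\<in>Q. Plo q a q' \<le> \<gamma> q' \<and> \<gamma> q' \<le> Phi q a q'}"

definition Gamma :: "real \<Rightarrow> real \<Rightarrow> 'a::euclidean_space set \<Rightarrow> 'a set set
    \<Rightarrow> ('a set \<Rightarrow> nat \<Rightarrow> 'a set \<Rightarrow> real) \<Rightarrow> ('a set \<Rightarrow> nat \<Rightarrow> 'a set \<Rightarrow> real)
    \<Rightarrow> 'a set \<Rightarrow> nat \<Rightarrow> ('a set \<Rightarrow> real) set" where
  "Gamma s eps X Qsafe Plo Phi q a =
     (if q \<in> Qsafe then
        {\<gamma> \<in> distrs (Qall X Qsafe). \<exists>\<gamma>h \<in> hatGamma (Qall X Qsafe) Plo Phi q a.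
            OT_cost s (Qall X Qsafe) \<gamma> \<gamma>h \<le> ereal (eps powr s)}
      else hatGamma (Qall X Qsafe) Plo Phi q a)"

end

theory Submission
  imports Defs
begin

(* Translating the noise by f_a(x) is an isometry of the state space, so every coupling of p_v
   and the nominal distribution pushes forward to a coupling of the two translated measures at no
   larger transport cost.  Restricting such a coupling to products q x q' of cells yields a coupling
   of gamma_{x,a} and gamma-hat := T^a_{p-hat}(. | x) on Q, whose discrete cost is no larger either,
   because c(q,q') is the infimum of |y - y'|^s over q x q'.  Taking the infimum over couplings gives
   T_c(gamma_{x,a}, gamma-hat) <= W_s(p_v, p-hat)^s <= eps^s, while gamma-hat lies in the interval
   set Gamma-hat_{q,a} by the defining bounds of the abstraction at x in q. *)

definition borel_partition :: "'a::topological_space set set \<Rightarrow> bool" where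
  "borel_partition Q \<longleftrightarrow> finite Q \<and> Q \<subseteq> sets borel \<and> disjoint Q \<and> \<Union>Q = UNIV"

lemma borel_partition_Qall:
  assumes "finite Qsafe" "Qsafe \<subseteq> sets borel" "disjoint Qsafe" "\<Union>Qsafe = X" "X \<in> sets borel"
  shows "borel_partition (Qall X Qsafe)"
  using assms unfolding borel_partition_def Qall_def disjoint_def by auto

lemma sum_measure_borel_partition:
  assumes "borel_partition Q" "sets M = sets borel" "finite_measure M"
  shows "(\<Sum>B\<in>Q. measure M B) = measure M (space M)"
proof -
  have Q: "finite Q" "Q \<subseteq> sets M" "disjoint_family_on (\<lambda>B. B) Q" "\<Union>Q = space M"
    using assms(1,2) sets_eq_imp_space_eq[OF assms(2)]
    by (auto simp: borel_partition_def disjoint_family_on_def disjoint_def)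
  have "measure M (\<Union>B\<in>Q. B) = (\<Sum>B\<in>Q. measure M B)"
    using Q finite_measure.emeasure_finite[OF assms(3)] by (intro measure_finite_Union) auto
  with Q(4) show ?thesis by simp
qed

lemma in_distrs_if_eq_measure:
  assumes "borel_partition Q" "sets M = sets borel" "prob_space M" "\<forall>B\<in>Q. \<gamma> B = measure M B"
  shows "\<gamma> \<in> distrs Q"
  using sum_measure_borel_partition[OF assms(1,2) prob_space.finite_measure[OF assms(3)]]
    prob_space.prob_space[OF assms(3)] assms(4) unfolding distrs_def by simp

lemma sets_borel_prod:
  "sets (borel :: ('a::second_countable_topology \<times> 'b::second_countable_topology) measure)
    = sets (borel \<Otimes>\<^sub>M borel)"
  by (metis borel_prod)

lemma couplingD:
  assumes "\<pi> \<in> couplings p p'"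
  shows "sets \<pi> = sets (borel \<Otimes>\<^sub>M borel)" "prob_space \<pi>"
    and "distr \<pi> borel fst = p" "distr \<pi> borel snd = p'"
    and "fst \<in> \<pi> \<rightarrow>\<^sub>M borel" "snd \<in> \<pi> \<rightarrow>\<^sub>M borel"
proof -
  show sets: "sets \<pi> = sets (borel \<Otimes>\<^sub>M borel)" and "prob_space \<pi>"
    and "distr \<pi> borel fst = p" "distr \<pi> borel snd = p'"
    using assms unfolding couplings_def borel_prod by auto
  show "fst \<in> \<pi> \<rightarrow>\<^sub>M borel" "snd \<in> \<pi> \<rightarrow>\<^sub>M borel"
    unfolding measurable_cong_sets[OF sets refl] by simp_all
qed

lemma coupling_Times_in_sets:
  assumes "\<pi> \<in> couplings p p'" "A \<in> sets borel" "B \<in> sets borel"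
  shows "A \<times> B \<in> sets \<pi>"
  using couplingD(1)[OF assms(1)] assms(2,3) by simp

lemma coupling_measure_Times_UNIV:
  assumes "\<pi> \<in> couplings p p'" "A \<in> sets borel"
  shows "measure \<pi> (A \<times> UNIV) = measure p A" "measure \<pi> (UNIV \<times> A) = measure p' A"
proof -
  note \<pi> = couplingD[OF assms(1)]
  have "space \<pi> = UNIV"
    using sets_eq_imp_space_eq[OF \<pi>(1)] by (simp add: space_pair_measure)
  then show "measure \<pi> (A \<times> UNIV) = measure p A" "measure \<pi> (UNIV \<times> A) = measure p' A"
    using measure_distr[of _ \<pi> borel A] assms(2) \<pi>(3-6) by (auto simp: vimage_fst vimage_snd)
qed

lemma nn_integral_coupling_marginals:
  assumes \<pi>: "\<pi> \<in> couplings p p'" and h: "h \<in> borel_measurable borel"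
  shows "(\<integral>\<^sup>+ z. h (fst z) \<partial>\<pi>) = (\<integral>\<^sup>+ x. h x \<partial>p)" "(\<integral>\<^sup>+ z. h (snd z) \<partial>\<pi>) = (\<integral>\<^sup>+ x. h x \<partial>p')"
  using h couplingD(3-6)[OF \<pi>] by (auto simp flip: nn_integral_distr)

lemma product_coupling:
  assumes "sets p = sets borel" "sets p' = sets borel" "prob_space p" "prob_space p'"
  shows "p \<Otimes>\<^sub>M p' \<in> couplings p p'"
proof -
  interpret p: prob_space p by fact
  interpret p': prob_space p' by fact
  have space: "space p = UNIV" "space p' = UNIV"
    using assms(1,2) by (auto dest!: sets_eq_imp_space_eq)
  have sets: "sets (p \<Otimes>\<^sub>M p') = sets borel"
    using sets_pair_measure_cong[OF assms(1,2)] by (subst (asm) borel_prod)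
  have "distr (p \<Otimes>\<^sub>M p') borel fst = p"
  proof (rule measure_eqI)
    fix A assume "A \<in> sets (distr (p \<Otimes>\<^sub>M p') borel fst)"
    then have A: "A \<in> sets p" using assms(1) by simp
    have "fst -` A \<inter> space (p \<Otimes>\<^sub>M p') = A \<times> space p'"
      using space by (auto simp: space_pair_measure)
    then show "emeasure (distr (p \<Otimes>\<^sub>M p') borel fst) A = emeasure p A"
      using p'.emeasure_pair_measure_Times[OF A sets.top[of p']] A assms(1)
      by (simp add: emeasure_distr p'.emeasure_space_1)
  qed (simp add: assms(1))
  moreover have "distr (p \<Otimes>\<^sub>M p') borel snd = p'"
  proof (rule measure_eqI)
    fix A assume "A \<in> sets (distr (p \<Otimes>\<^sub>M p') borel snd)"
    then have A: "A \<in> sets p'" using assms(2) by simp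
    have "snd -` A \<inter> space (p \<Otimes>\<^sub>M p') = space p \<times> A"
      using space by (auto simp: space_pair_measure)
    then show "emeasure (distr (p \<Otimes>\<^sub>M p') borel snd) A = emeasure p' A"
      using p'.emeasure_pair_measure_Times[OF sets.top[of p] A] A assms(2)
      by (simp add: emeasure_distr p.emeasure_space_1)
  qed (simp add: assms(2))
  ultimately show ?thesis
    using sets prob_space_pair[OF assms(3,4)] by (simp add: couplings_def)
qed

lemma cell_cost_nonneg: "0 \<le> cell_cost s B B'"
  unfolding cell_cost_def by (rule INF_greatest) simp

lemma cell_cost_le: "y \<in> B \<Longrightarrow> y' \<in> B' \<Longrightarrow> cell_cost s B B' \<le> ereal (norm (y - y') powr s)"
  unfolding cell_cost_def by (rule INF_lower2[of "(y, y')"]) auto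

lemma disjoint_family_on_Times:
  assumes "disjoint Q"
  shows "disjoint_family_on (\<lambda>z. fst z \<times> snd z) (Q \<times> Q)"
  unfolding disjoint_family_on_def
proof (intro ballI impI)
  fix z z' assume "z \<in> Q \<times> Q" "z' \<in> Q \<times> Q" "z \<noteq> z'"
  then have "fst z \<inter> fst z' = {} \<or> snd z \<inter> snd z' = {}"
    using assms unfolding disjoint_def by (metis mem_Times_iff prod.expand)
  then show "fst z \<times> snd z \<inter> fst z' \<times> snd z' = {}"
    by (auto simp: Times_Int_Times)
qed

lemma coupling_restrict_in_fin_couplings:
  assumes Q: "borel_partition Q" and \<pi>: "\<pi> \<in> couplings p p'"
    and \<gamma>: "\<forall>B\<in>Q. \<gamma> B = measure p B" and \<gamma>': "\<forall>B\<in>Q. \<gamma>' B = measure p' B"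
  shows "(\<lambda>z. measure \<pi> (fst z \<times> snd z)) \<in> fin_couplings Q \<gamma> \<gamma>'"
proof -
  interpret prob_space \<pi> using couplingD(2)[OF \<pi>] .
  have Q': "finite Q" "Q \<subseteq> sets borel" "disjoint Q" "\<Union>Q = UNIV"
    using Q by (auto simp: borel_partition_def)
  have "(\<Sum>B'\<in>Q. measure \<pi> (B \<times> B')) = measure \<pi> (B \<times> UNIV)"
    and "(\<Sum>B'\<in>Q. measure \<pi> (B' \<times> B)) = measure \<pi> (UNIV \<times> B)" if "B \<in> Q" for B
  proof -
    have "(\<lambda>B'. B \<times> B') ` Q \<subseteq> sets \<pi>" "(\<lambda>B'. B' \<times> B) ` Q \<subseteq> sets \<pi>"
      using Q'(2) that coupling_Times_in_sets[OF \<pi>] by blast+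
    moreover have "disjoint_family_on (\<lambda>B'. B \<times> B') Q" "disjoint_family_on (\<lambda>B'. B' \<times> B) Q"
      using Q'(3) by (simp_all add: disjoint_family_on_def disjoint_def Times_Int_Times)
    ultimately have "measure \<pi> (\<Union>B'\<in>Q. B \<times> B') = (\<Sum>B'\<in>Q. measure \<pi> (B \<times> B'))"
      "measure \<pi> (\<Union>B'\<in>Q. B' \<times> B) = (\<Sum>B'\<in>Q. measure \<pi> (B' \<times> B))"
      using Q'(1) by (simp_all add: measure_finite_Union)
    moreover have "(\<Union>B'\<in>Q. B \<times> B') = B \<times> UNIV" "(\<Union>B'\<in>Q. B' \<times> B) = UNIV \<times> B"
      using Q'(4) by blast+
    ultimately show "(\<Sum>B'\<in>Q. measure \<pi> (B \<times> B')) = measure \<pi> (B \<times> UNIV)"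
      "(\<Sum>B'\<in>Q. measure \<pi> (B' \<times> B)) = measure \<pi> (UNIV \<times> B)" by simp_all
  qed
  then show ?thesis
    using Q' \<gamma> \<gamma>' coupling_measure_Times_UNIV[OF \<pi>] by (auto simp: fin_couplings_def subsetD)
qed

lemma OT_cost_le_coupling_cost:
  fixes \<pi> :: "('a::euclidean_space \<times> 'a) measure"
  assumes Q: "borel_partition Q" and \<pi>: "\<pi> \<in> couplings p p'"
    and \<gamma>: "\<forall>B\<in>Q. \<gamma> B = measure p B" and \<gamma>': "\<forall>B\<in>Q. \<gamma>' B = measure p' B"
  shows "OT_cost s Q \<gamma> \<gamma>' \<le> enn2ereal (\<integral>\<^sup>+ z. ennreal (norm (fst z - snd z) powr s) \<partial>\<pi>)"
proof -
  interpret prob_space \<pi> using couplingD(2)[OF \<pi>] .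
  have Q': "finite Q" "Q \<subseteq> sets borel" "disjoint Q" "\<Union>Q = UNIV"
    using Q by (auto simp: borel_partition_def)
  define c where "c z = e2ennreal (cell_cost s (fst z) (snd z))" for z :: "'a set \<times> 'a set"
  have rect: "fst z \<times> snd z \<in> sets \<pi>" if "z \<in> Q \<times> Q" for z
    using that by (intro coupling_Times_in_sets[OF \<pi>] subsetD[OF Q'(2)]) auto
  have "OT_cost s Q \<gamma> \<gamma>' \<le> (\<Sum>z\<in>Q \<times> Q. cell_cost s (fst z) (snd z) * ereal (measure \<pi> (fst z \<times> snd z)))"
    unfolding OT_cost_def by (rule INF_lower[OF coupling_restrict_in_fin_couplings[OF assms]])
  also have "\<dots> = enn2ereal (\<Sum>z\<in>Q \<times> Q. c z * emeasure \<pi> (fst z \<times> snd z))"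
    by (subst sum_enn2ereal[symmetric])
      (simp_all add: times_ennreal.rep_eq c_def enn2ereal_e2ennreal cell_cost_nonneg emeasure_eq_measure)
  also have "(\<Sum>z\<in>Q \<times> Q. c z * emeasure \<pi> (fst z \<times> snd z))
      = (\<integral>\<^sup>+ w. (\<Sum>z\<in>Q \<times> Q. c z * indicator (fst z \<times> snd z) w) \<partial>\<pi>)"
    using rect by (simp add: nn_integral_sum nn_integral_cmult_indicator)
  also have "\<dots> \<le> (\<integral>\<^sup>+ w. ennreal (norm (fst w - snd w) powr s) \<partial>\<pi>)"
  proof (rule nn_integral_mono)
    fix w :: "'a \<times> 'a"
    obtain B B' where B: "B \<in> Q" "fst w \<in> B" and B': "B' \<in> Q" "snd w \<in> B'"
      using Q'(4) by (metis UnionE UNIV_I)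
    have "(\<Sum>z\<in>Q \<times> Q. c z * indicator (fst z \<times> snd z) w) = c (B, B')"
      using B B' Q' by (intro sum_indicator_disjoint_family disjoint_family_on_Times) (auto simp: mem_Times_iff)
    also have "\<dots> \<le> ennreal (norm (fst w - snd w) powr s)"
      unfolding c_def using e2ennreal_mono[OF cell_cost_le[OF B(2) B'(2)]] by simp
    finally show "(\<Sum>z\<in>Q \<times> Q. c z * indicator (fst z \<times> snd z) w) \<le> ennreal (norm (fst w - snd w) powr s)" .
  qed
  finally show ?thesis by (simp add: less_eq_ennreal.rep_eq)
qed

lemma coupling_measurable_map_prod:
  fixes g :: "'a::euclidean_space \<Rightarrow> 'b::euclidean_space"
  assumes "\<pi> \<in> couplings p p'" "g \<in> borel_measurable borel"
  shows "map_prod g g \<in> \<pi> \<rightarrow>\<^sub>M borel"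
  unfolding measurable_cong_sets[OF couplingD(1)[OF assms(1)] sets_borel_prod] map_prod_def split_def
  using assms(2) by measurable

lemma coupling_distr_map_prod:
  fixes g :: "'a::euclidean_space \<Rightarrow> 'b::euclidean_space"
  assumes \<pi>: "\<pi> \<in> couplings p p'" and g: "g \<in> borel_measurable borel"
  shows "distr \<pi> borel (map_prod g g) \<in> couplings (distr p borel g) (distr p' borel g)"
proof -
  note \<pi>' = couplingD[OF \<pi>]
  have gg: "map_prod g g \<in> \<pi> \<rightarrow>\<^sub>M borel"
    using \<pi> g by (rule coupling_measurable_map_prod)
  have "fst \<in> (borel :: ('b \<times> 'b) measure) \<rightarrow>\<^sub>M borel"
    "snd \<in> (borel :: ('b \<times> 'b) measure) \<rightarrow>\<^sub>M borel"
    using measurable_cong_sets[OF sets_borel_prod refl] by auto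
  then have "distr (distr \<pi> borel (map_prod g g)) borel fst = distr (distr \<pi> borel fst) borel g"
    "distr (distr \<pi> borel (map_prod g g)) borel snd = distr (distr \<pi> borel snd) borel g"
    using \<pi>'(5,6) gg g by (simp_all add: distr_distr comp_def)
  then show ?thesis
    using \<pi>' gg prob_space.prob_space_distr by (auto simp: couplings_def)
qed

lemma nn_integral_cost_distr_map_prod_le:
  fixes g :: "'a::euclidean_space \<Rightarrow> 'a"
  assumes \<pi>: "\<pi> \<in> couplings p p'" and g: "g \<in> borel_measurable borel"
    and nonexpansive: "\<And>u v. dist (g u) (g v) \<le> dist u v" and "0 \<le> s"
  shows "(\<integral>\<^sup>+ z. ennreal (norm (fst z - snd z) powr s) \<partial>distr \<pi> borel (map_prod g g))
       \<le> (\<integral>\<^sup>+ z. ennreal (norm (fst z - snd z) powr s) \<partial>\<pi>)"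
proof -
  have gg: "map_prod g g \<in> \<pi> \<rightarrow>\<^sub>M borel"
    using \<pi> g by (rule coupling_measurable_map_prod)
  have "(\<integral>\<^sup>+ z. ennreal (norm (fst z - snd z) powr s) \<partial>distr \<pi> borel (map_prod g g))
      = (\<integral>\<^sup>+ z. ennreal (norm (g (fst z) - g (snd z)) powr s) \<partial>\<pi>)"
    using gg by (subst nn_integral_distr)
      (simp_all add: measurable_cong_sets[OF sets_borel_prod refl])
  also have "\<dots> \<le> (\<integral>\<^sup>+ z. ennreal (norm (fst z - snd z) powr s) \<partial>\<pi>)"
    using nonexpansive \<open>0 \<le> s\<close> by (intro nn_integral_mono ennreal_leI powr_mono2) (auto simp: dist_norm)
  finally show ?thesis .
qed

lemma norm_diff_powr_le:
  fixes u v :: "'a::real_normed_vector"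
  assumes "0 \<le> s"
  shows "norm (u - v) powr s \<le> 2 powr s * (norm u powr s + norm v powr s)"
proof -
  have "norm (u - v) powr s \<le> (2 * max (norm u) (norm v)) powr s"
    using norm_triangle_ineq4[of u v] assms by (intro powr_mono2) auto
  also have "\<dots> = 2 powr s * max (norm u) (norm v) powr s"
    by (simp add: powr_mult)
  also have "\<dots> \<le> 2 powr s * (norm u powr s + norm v powr s)"
    by (intro mult_left_mono) (auto simp: max_def)
  finally show ?thesis .
qed

(* Needed because wasserstein is defined through enn2real, which sends an infinite infimum to 0. *)
lemma INF_coupling_cost_finite:
  fixes p p' :: "'a::euclidean_space measure"
  assumes "p \<in> Ds s" "p' \<in> Ds s" "0 \<le> s"
  shows "(INF \<pi>\<in>couplings p p'. \<integral>\<^sup>+ z. ennreal (norm (fst z - snd z) powr s) \<partial>\<pi>) < \<infinity>"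
proof -
  have \<pi>: "p \<Otimes>\<^sub>M p' \<in> couplings p p'"
    using assms by (intro product_coupling) (auto simp: Ds_def)
  have meas: "(\<lambda>z. ennreal (norm (fst z) powr s)) \<in> borel_measurable (p \<Otimes>\<^sub>M p')"
    "(\<lambda>z. ennreal (norm (snd z) powr s)) \<in> borel_measurable (p \<Otimes>\<^sub>M p')"
    unfolding measurable_cong_sets[OF couplingD(1)[OF \<pi>] refl] by measurable
  have "(\<integral>\<^sup>+ z. ennreal (norm (fst z - snd z) powr s) \<partial>(p \<Otimes>\<^sub>M p'))
      \<le> (\<integral>\<^sup>+ z. ennreal (2 powr s) * (ennreal (norm (fst z) powr s) + ennreal (norm (snd z) powr s)) \<partial>(p \<Otimes>\<^sub>M p'))"
    using norm_diff_powr_le[OF assms(3)]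
    by (intro nn_integral_mono) (simp add: ennreal_mult[symmetric] flip: ennreal_plus)
  also have "\<dots> = ennreal (2 powr s) *
      ((\<integral>\<^sup>+ z. ennreal (norm (fst z) powr s) \<partial>(p \<Otimes>\<^sub>M p')) + (\<integral>\<^sup>+ z. ennreal (norm (snd z) powr s) \<partial>(p \<Otimes>\<^sub>M p')))"
    using meas by (simp add: nn_integral_cmult nn_integral_add)
  also have "\<dots> = ennreal (2 powr s) * ((\<integral>\<^sup>+ x. ennreal (norm x powr s) \<partial>p) + (\<integral>\<^sup>+ x. ennreal (norm x powr s) \<partial>p'))"
    using nn_integral_coupling_marginals[OF \<pi>, of "\<lambda>x. ennreal (norm x powr s)"] by simp
  also have "\<dots> < \<infinity>"
    using assms by (simp add: Ds_def ennreal_mult_less_top)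
  finally show ?thesis
    using \<pi> by (meson INF_lower le_less_trans)
qed

lemma wasserstein_powr:
  assumes "0 < s"
  shows "wasserstein s p p' powr s
    = enn2real (INF \<pi>\<in>couplings p p'. \<integral>\<^sup>+ z. ennreal (norm (fst z - snd z) powr s) \<partial>\<pi>)"
  using assms by (simp add: wasserstein_def powr_powr)

lemma OT_cost_distr_le_wasserstein:
  fixes g :: "'a::euclidean_space \<Rightarrow> 'a"
  assumes Q: "borel_partition Q" and "p \<in> Ds s" "p' \<in> Ds s" "0 < s"
    and g: "g \<in> borel_measurable borel" and nonexpansive: "\<And>u v. dist (g u) (g v) \<le> dist u v"
    and \<gamma>: "\<forall>B\<in>Q. \<gamma> B = measure (distr p borel g) B"
    and \<gamma>': "\<forall>B\<in>Q. \<gamma>' B = measure (distr p' borel g) B"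
  shows "OT_cost s Q \<gamma> \<gamma>' \<le> ereal (wasserstein s p p' powr s)"
proof -
  define cost where "cost \<pi> = (\<integral>\<^sup>+ z. ennreal (norm (fst z - snd z) powr s) \<partial>\<pi>)"
    for \<pi> :: "('a \<times> 'a) measure"
  have "OT_cost s Q \<gamma> \<gamma>' \<le> enn2ereal (cost \<pi>)" if \<pi>: "\<pi> \<in> couplings p p'" for \<pi>
  proof -
    have "OT_cost s Q \<gamma> \<gamma>' \<le> enn2ereal (cost (distr \<pi> borel (map_prod g g)))"
      unfolding cost_def using Q coupling_distr_map_prod[OF \<pi> g] \<gamma> \<gamma>' by (rule OT_cost_le_coupling_cost)
    also have "\<dots> \<le> enn2ereal (cost \<pi>)"
      unfolding cost_def less_eq_ennreal.rep_eq[symmetric] using \<pi> g nonexpansive \<open>0 < s\<close>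
      by (intro nn_integral_cost_distr_map_prod_le) auto
    finally show ?thesis .
  qed
  then have "OT_cost s Q \<gamma> \<gamma>' \<le> (INF \<pi>\<in>couplings p p'. enn2ereal (cost \<pi>))"
    by (rule INF_greatest)
  also have "\<dots> = enn2ereal (INF \<pi>\<in>couplings p p'. cost \<pi>)"
    by (simp add: Inf_ennreal.rep_eq image_image)
  also have "\<dots> = enn2ereal (ennreal (enn2real (INF \<pi>\<in>couplings p p'. cost \<pi>)))"
    using INF_coupling_cost_finite[OF assms(2,3)] \<open>0 < s\<close> unfolding cost_def by simp
  also have "\<dots> = ereal (wasserstein s p p' powr s)"
    using \<open>0 < s\<close> by (simp add: wasserstein_powr cost_def)
  finally show ?thesis .
qed

lemma Tk_eq_measure_distr:
  assumes "sets p = sets borel" "B \<in> sets borel"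
  shows "Tk f u p x B = measure (distr p borel (\<lambda>v. f u x + v)) B"
  using assms sets_eq_imp_space_eq[OF assms(1)]
  by (simp add: Tk_def measure_distr measurable_cong_sets[OF assms(1) refl] vimage_def)

lemma Tk_in_distrs:
  assumes Q: "borel_partition Q" and "sets p = sets borel" "prob_space p"
  shows "Tk f u p x \<in> distrs Q"
proof (rule in_distrs_if_eq_measure[OF Q])
  have "(\<lambda>v. f u x + v) \<in> p \<rightarrow>\<^sub>M borel"
    unfolding measurable_cong_sets[OF assms(2) refl] by simp
  then show "prob_space (distr p borel (\<lambda>v. f u x + v))"
    by (rule prob_space.prob_space_distr[OF assms(3)])
  show "\<forall>B\<in>Q. Tk f u p x B = measure (distr p borel (\<lambda>v. f u x + v)) B"
    using Q assms(2) by (auto simp: borel_partition_def Tk_eq_measure_distr)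
qed simp

lemma OT_cost_Tk_le_wasserstein:
  assumes Q: "borel_partition Q" and p: "p \<in> Ds s" and p': "p' \<in> Ds s" and "0 < s"
  shows "OT_cost s Q (Tk f u p x) (Tk f u p' x) \<le> ereal (wasserstein s p p' powr s)"
proof (rule OT_cost_distr_le_wasserstein[OF Q p p' \<open>0 < s\<close>])
  show "(\<lambda>v. f u x + v) \<in> borel_measurable borel"
    by simp
  show "\<And>v v'. dist (f u x + v) (f u x + v') \<le> dist v v'"
    by (simp add: dist_norm)
  show "\<forall>B\<in>Q. Tk f u p x B = measure (distr p borel (\<lambda>v. f u x + v)) B"
    "\<forall>B\<in>Q. Tk f u p' x B = measure (distr p' borel (\<lambda>v. f u x + v)) B"
    using Q p p' by (auto simp: borel_partition_def Ds_def Tk_eq_measure_distr)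
qed

theorem proposition1:
  fixes f :: "nat \<Rightarrow> 'a::euclidean_space \<Rightarrow> 'a"
    and m :: nat and s eps :: real
    and phat pv :: "'a measure"
    and X Xtgt :: "'a set" and Qsafe :: "'a set set"
    and Plo Phi :: "'a set \<Rightarrow> nat \<Rightarrow> 'a set \<Rightarrow> real"
    and q :: "'a set" and a :: nat and x :: 'a
  assumes "s \<ge> 1" and "eps \<ge> 0"
    and "\<forall>u\<in>{1..m}. continuous_on UNIV (f u)"
    and "phat \<in> Ds s"
    and "X \<in> sets borel" and "bounded X" and "Xtgt \<subseteq> X"
    and "finite Qsafe" and "\<forall>B\<in>Qsafe. B \<in> sets borel"
    and "\<forall>B\<in>Qsafe. \<forall>C\<in>Qsafe. B \<noteq> C \<longrightarrow> B \<inter> C = {}"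
    and "\<Union>Qsafe = X"
    and "\<forall>B\<in>Qsafe. B \<subseteq> Xtgt \<or> B \<inter> Xtgt = {}"
    and "\<forall>q1\<in>Qall X Qsafe. \<forall>b\<in>{1..m}. \<forall>q2\<in>Qall X Qsafe.
           0 \<le> Plo q1 b q2 \<and> Plo q1 b q2 \<le> Phi q1 b q2 \<and> Phi q1 b q2 \<le> 1"
    and "\<forall>q1\<in>Qall X Qsafe. \<forall>b\<in>{1..m}.
           (\<Sum>q2\<in>Qall X Qsafe. Plo q1 b q2) \<le> 1 \<and> 1 \<le> (\<Sum>q2\<in>Qall X Qsafe. Phi q1 b q2)"
    and "\<forall>q1\<in>Qsafe. \<forall>b\<in>{1..m}. \<forall>q2\<in>Qall X Qsafe. \<forall>y\<in>q1.
           Plo q1 b q2 \<le> Tk f b phat y q2 \<and> Tk f b phat y q2 \<le> Phi q1 b q2"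
    and "\<forall>b\<in>{1..m}. Plo (- X) b (- X) = 1 \<and> Phi (- X) b (- X) = 1"
    and "q \<in> Qsafe" and "a \<in> {1..m}" and "x \<in> q"
    and "pv \<in> Pv s eps phat"
  shows "(\<lambda>q'. Tk f a pv x q') \<in> Gamma s eps X Qsafe Plo Phi q a"
proof -
  have Q: "borel_partition (Qall X Qsafe)"
    using assms(5,8-11) by (intro borel_partition_Qall) (auto simp: disjoint_def)
  have pv: "pv \<in> Ds s" "wasserstein s pv phat \<le> eps"
    using assms(20) by (auto simp: Pv_def)
  have "Tk f a pv x \<in> distrs (Qall X Qsafe)"
    using Tk_in_distrs[OF Q] pv(1) by (auto simp: Ds_def)
  moreover have "Tk f a phat x \<in> hatGamma (Qall X Qsafe) Plo Phi q a"
    using Tk_in_distrs[OF Q] assms(4,15,17-19) by (auto simp: hatGamma_def Ds_def)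
  moreover have "OT_cost s (Qall X Qsafe) (Tk f a pv x) (Tk f a phat x) \<le> ereal (eps powr s)"
  proof -
    have "OT_cost s (Qall X Qsafe) (Tk f a pv x) (Tk f a phat x) \<le> ereal (wasserstein s pv phat powr s)"
      using assms(1) by (intro OT_cost_Tk_le_wasserstein[OF Q pv(1) assms(4)]) simp
    also have "\<dots> \<le> ereal (eps powr s)"
      using pv(2) assms(1) by (auto intro!: powr_mono2 simp: wasserstein_def)
    finally show ?thesis .
  qed
  ultimately show ?thesis
    using assms(17) unfolding Gamma_def by auto
qed

end
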